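(* Let $\mu:I\to\mathbb{N}^*$ be a signature. The set $\mathscr{J}(\Omega_\mu)$ of ideals of $\Omega_\mu$, with the topology induced by the product topology on the power set $\mathfrak P(\Omega_\mu)\cong\{0,1\}^{\Omega_\mu}$, is compact if and only if $\mu^{-1}[\mathbb{N}^*\setminus\{1\}]=\{i\in I:\mu_i\ge 2\}$ is finite.
   Context: A relational structure of signature $\mu$ is $(A;(R_i)_{i\in I})$ with $R_i$ a $\mu_i$-ary relation on $A$; embeddings are injective maps preserving and reflecting all relations. $\Omega_\mu$ is the set of isomorphism types of finite structures of signature $\mu$, ordered by embeddability. An ideal of $\Omega_\mu$ is a non-empty, downward closed, up-directed subset. *)

theory Defs
  imports "HOL-Analysis.Analysis"
begin

text \<open>A finite relational structure of signature mu (indexed by I) with carrier a finite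
  subset of nat: a pair (A, R), where R i is a set of tuples (lists) of length mu i over A
  for i in I, and R i is empty for indices outside I.\<close>

type_synonym 'i struc = "nat set \<times> ('i \<Rightarrow> nat list set)"

definition wf_struc :: "'i set \<Rightarrow> ('i \<Rightarrow> nat) \<Rightarrow> 'i struc \<Rightarrow> bool" where
  "wf_struc I \<mu> S \<longleftrightarrow> finite (fst S) \<and>
     (\<forall>i\<in>I. snd S i \<subseteq> {xs. length xs = \<mu> i \<and> set xs \<subseteq> fst S}) \<and>
     (\<forall>i. i \<notin> I \<longrightarrow> snd S i = {})"

definition is_embedding :: "'i set \<Rightarrow> ('i \<Rightarrow> nat) \<Rightarrow> (nat \<Rightarrow> nat) \<Rightarrow> 'i struc \<Rightarrow> 'i struc \<Rightarrow> bool" where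
  "is_embedding I \<mu> f S T \<longleftrightarrow> inj_on f (fst S) \<and> f ` fst S \<subseteq> fst T \<and>
     (\<forall>i\<in>I. \<forall>xs. length xs = \<mu> i \<and> set xs \<subseteq> fst S \<longrightarrow>
        (xs \<in> snd S i \<longleftrightarrow> map f xs \<in> snd T i))"

definition embeds :: "'i set \<Rightarrow> ('i \<Rightarrow> nat) \<Rightarrow> 'i struc \<Rightarrow> 'i struc \<Rightarrow> bool" where
  "embeds I \<mu> S T \<longleftrightarrow> (\<exists>f. is_embedding I \<mu> f S T)"

definition isomorphic :: "'i set \<Rightarrow> ('i \<Rightarrow> nat) \<Rightarrow> 'i struc \<Rightarrow> 'i struc \<Rightarrow> bool" where
  "isomorphic I \<mu> S T \<longleftrightarrow> (\<exists>f. is_embedding I \<mu> f S T \<and> f ` fst S = fst T)"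

definition Omega :: "'i set \<Rightarrow> ('i \<Rightarrow> nat) \<Rightarrow> 'i struc set set" where
  "Omega I \<mu> = {S. wf_struc I \<mu> S} //
     {(S, T). wf_struc I \<mu> S \<and> wf_struc I \<mu> T \<and> isomorphic I \<mu> S T}"

definition omega_le :: "'i set \<Rightarrow> ('i \<Rightarrow> nat) \<Rightarrow> 'i struc set \<Rightarrow> 'i struc set \<Rightarrow> bool" where
  "omega_le I \<mu> X Y \<longleftrightarrow> (\<exists>S\<in>X. \<exists>T\<in>Y. embeds I \<mu> S T)"

definition is_ideal :: "'i set \<Rightarrow> ('i \<Rightarrow> nat) \<Rightarrow> 'i struc set set \<Rightarrow> bool" where
  "is_ideal I \<mu> D \<longleftrightarrow> D \<subseteq> Omega I \<mu> \<and> D \<noteq> {} \<and>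
     (\<forall>X\<in>D. \<forall>Y\<in>Omega I \<mu>. omega_le I \<mu> Y X \<longrightarrow> Y \<in> D) \<and>
     (\<forall>X\<in>D. \<forall>Y\<in>D. \<exists>Z\<in>D. omega_le I \<mu> X Z \<and> omega_le I \<mu> Y Z)"

definition ideals :: "'i set \<Rightarrow> ('i \<Rightarrow> nat) \<Rightarrow> 'i struc set set set" where
  "ideals I \<mu> = {D. is_ideal I \<mu> D}"

text \<open>Identification of the power set P(Omega) with {0,1}^Omega (bool-valued functions,
  extensional on Omega), carrying the product of discrete topologies.\<close>
definition char_fun :: "'a set \<Rightarrow> 'a set \<Rightarrow> ('a \<Rightarrow> bool)" where
  "char_fun \<Omega> D = restrict (\<lambda>x. x \<in> D) \<Omega>"

definition powerset_topology :: "'a set \<Rightarrow> ('a \<Rightarrow> bool) topology" where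
  "powerset_topology \<Omega> = product_topology (\<lambda>_. discrete_topology (UNIV :: bool set)) \<Omega>"

end

theory Submission
  imports Defs
begin

(* The ideals form a closed, hence compact, subset of the compact Hausdorff space {0,1}^Omega
  exactly when every set D that agrees with some ideal on each finite set of points is itself
  an ideal.

  If only finitely many relations have arity at least 2, any two structures X and Y have a
  finite set of common upper bounds below every other one: inside an upper bound Z, the
  substructure on the union of the images of X and Y has at most |X| + |Y| points, its unary
  relations are forced by X and Y, and there are finitely many choices for the others. Hence
  nonemptiness, downward closure and directedness of D are all witnessed on finite sets.

  Otherwise fix j with arity at least 2, let x be a point satisfying R_j, y a bare point, and
  z_n their union in which R_n holds on all tuples meeting both points. The union of the
  principal ideals of x and y is not directed, but it is approximated on each finite set by the
  principal ideals of the z_n, because a structure below none of x, y lies below at most one z_n. *)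

section \<open>Ideals of a preorder\<close>

definition ideal_in :: "'a set \<Rightarrow> ('a \<Rightarrow> 'a \<Rightarrow> bool) \<Rightarrow> 'a set \<Rightarrow> bool" where
  "ideal_in \<Omega> le D \<longleftrightarrow> D \<subseteq> \<Omega> \<and> D \<noteq> {} \<and>
     (\<forall>x\<in>D. \<forall>y\<in>\<Omega>. le y x \<longrightarrow> y \<in> D) \<and>
     (\<forall>x\<in>D. \<forall>y\<in>D. \<exists>z\<in>D. le x z \<and> le y z)"

lemma Int_eq_mem_iff: "A \<inter> F = B \<inter> F \<Longrightarrow> x \<in> F \<Longrightarrow> x \<in> A \<longleftrightarrow> x \<in> B"
  by blast

lemma ideal_inD:
  assumes "ideal_in \<Omega> le D"
  shows "D \<subseteq> \<Omega>" and "D \<noteq> {}" and "x \<in> D \<Longrightarrow> y \<in> \<Omega> \<Longrightarrow> le y x \<Longrightarrow> y \<in> D"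
    and "x \<in> D \<Longrightarrow> y \<in> D \<Longrightarrow> \<exists>z\<in>D. le x z \<and> le y z"
  using assms unfolding ideal_in_def by blast+

definition finite_coinitial_upper_bounds :: "'a set \<Rightarrow> ('a \<Rightarrow> 'a \<Rightarrow> bool) \<Rightarrow> bool" where
  "finite_coinitial_upper_bounds \<Omega> le \<longleftrightarrow> (\<forall>x\<in>\<Omega>. \<forall>y\<in>\<Omega>. \<exists>C\<subseteq>\<Omega>. finite C \<and>
     (\<forall>w\<in>C. le x w \<and> le y w) \<and> (\<forall>z\<in>\<Omega>. le x z \<longrightarrow> le y z \<longrightarrow> (\<exists>w\<in>C. le w z)))"

lemma directed_if_finitely_approximated:
  assumes bounds: "finite_coinitial_upper_bounds \<Omega> le" and "D \<subseteq> \<Omega>"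
    and approx: "\<And>F. finite F \<Longrightarrow> \<exists>D'. ideal_in \<Omega> le D' \<and> D' \<inter> F = D \<inter> F"
    and xy: "x \<in> D" "y \<in> D"
  shows "\<exists>w\<in>D. le x w \<and> le y w"
proof -
  from xy \<open>D \<subseteq> \<Omega>\<close> have "x \<in> \<Omega>" "y \<in> \<Omega>"
    by auto
  with bounds obtain C where C: "C \<subseteq> \<Omega>" "finite C" "\<forall>w\<in>C. le x w \<and> le y w"
    "\<forall>z\<in>\<Omega>. le x z \<longrightarrow> le y z \<longrightarrow> (\<exists>w\<in>C. le w z)"
    unfolding finite_coinitial_upper_bounds_def by metis
  obtain D' where D': "ideal_in \<Omega> le D'" "D' \<inter> ({x, y} \<union> C) = D \<inter> ({x, y} \<union> C)"
    using approx[of "{x, y} \<union> C"] C(2) by blast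
  have "x \<in> D'" "y \<in> D'"
    using Int_eq_mem_iff[OF D'(2)] xy by blast+
  then obtain z where z: "z \<in> D'" "le x z" "le y z"
    using ideal_inD(4)[OF D'(1)] by blast
  then have "z \<in> \<Omega>"
    using ideal_inD(1)[OF D'(1)] by blast
  with z C(4) obtain w where "w \<in> C" "le w z"
    by blast
  then have "w \<in> D'"
    using ideal_inD(3)[OF D'(1) \<open>z \<in> D'\<close>] C(1) by blast
  with \<open>w \<in> C\<close> have "w \<in> D"
    using Int_eq_mem_iff[OF D'(2)] by blast
  with \<open>w \<in> C\<close> C(3) show ?thesis
    by blast
qed

lemma ideal_in_if_finitely_approximated:
  assumes bot: "b \<in> \<Omega>" "\<And>x. x \<in> \<Omega> \<Longrightarrow> le b x"
    and bounds: "finite_coinitial_upper_bounds \<Omega> le"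
    and "D \<subseteq> \<Omega>"
    and approx: "\<And>F. finite F \<Longrightarrow> \<exists>D'. ideal_in \<Omega> le D' \<and> D' \<inter> F = D \<inter> F"
  shows "ideal_in \<Omega> le D"
  unfolding ideal_in_def
proof (intro conjI ballI impI)
  show "D \<subseteq> \<Omega>"
    by fact
  obtain D' where D': "ideal_in \<Omega> le D'" "D' \<inter> {b} = D \<inter> {b}"
    using approx[of "{b}"] by blast
  have "b \<in> D'"
    using ideal_inD(2,3)[OF D'(1)] ideal_inD(1)[OF D'(1)] bot by blast
  then show "D \<noteq> {}"
    using Int_eq_mem_iff[OF D'(2)] by blast
next
  fix x y assume "x \<in> D" "y \<in> \<Omega>" "le y x"
  obtain D' where D': "ideal_in \<Omega> le D'" "D' \<inter> {x, y} = D \<inter> {x, y}"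
    using approx[of "{x, y}"] by blast
  have "x \<in> D'"
    using Int_eq_mem_iff[OF D'(2)] \<open>x \<in> D\<close> by blast
  then have "y \<in> D'"
    using ideal_inD(3)[OF D'(1)] \<open>y \<in> \<Omega>\<close> \<open>le y x\<close> by blast
  then show "y \<in> D"
    using Int_eq_mem_iff[OF D'(2)] by blast
next
  fix x y assume "x \<in> D" "y \<in> D"
  with bounds \<open>D \<subseteq> \<Omega>\<close> approx show "\<exists>w\<in>D. le x w \<and> le y w"
    by (rule directed_if_finitely_approximated)
qed

lemma ideal_in_principal:
  assumes "reflp_on \<Omega> le" "transp_on \<Omega> le" "z \<in> \<Omega>"
  shows "ideal_in \<Omega> le {y\<in>\<Omega>. le y z}"
  using assms unfolding ideal_in_def by (blast dest: reflp_onD transp_onD)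

lemma not_ideal_in_union_principal:
  assumes "transp_on \<Omega> le" "reflp_on \<Omega> le" "x \<in> \<Omega>" "y \<in> \<Omega>" "\<not> le x y" "\<not> le y x"
  shows "\<not> ideal_in \<Omega> le {w\<in>\<Omega>. le w x \<or> le w y}"
proof
  assume "ideal_in \<Omega> le {w\<in>\<Omega>. le w x \<or> le w y}"
  moreover have "x \<in> {w\<in>\<Omega>. le w x \<or> le w y}" "y \<in> {w\<in>\<Omega>. le w x \<or> le w y}"
    using assms by (auto dest: reflp_onD)
  ultimately obtain z where "z \<in> \<Omega>" "le z x \<or> le z y" "le x z" "le y z"
    unfolding ideal_in_def by blast
  then show False
    using assms by (blast dest: transp_onD)
qed

lemma finite_agreement_with_family:
  assumes "infinite J" and "\<And>n. n \<in> J \<Longrightarrow> L \<subseteq> D n"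
    and "\<And>x. x \<notin> L \<Longrightarrow> finite {n\<in>J. x \<in> D n}" and "finite F"
  shows "\<exists>n\<in>J. D n \<inter> F = L \<inter> F"
proof -
  have "finite (\<Union>x\<in>F - L. {n\<in>J. x \<in> D n})"
    by (rule finite_UN_I) (use assms(3,4) in auto)
  then have "infinite (J - (\<Union>x\<in>F - L. {n\<in>J. x \<in> D n}))"
    using \<open>infinite J\<close> by (rule Diff_infinite_finite)
  then obtain n where "n \<in> J - (\<Union>x\<in>F - L. {n\<in>J. x \<in> D n})"
    using infinite_imp_nonempty by blast
  then show ?thesis
    using assms(2) by blast
qed

section \<open>The powerset topology\<close>

lemma topspace_powerset_topology:
  "topspace (powerset_topology \<Omega>) = (\<Pi>\<^sub>E x\<in>\<Omega>. UNIV)"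
  by (simp add: powerset_topology_def)

lemma char_fun_in_topspace: "char_fun \<Omega> D \<in> topspace (powerset_topology \<Omega>)"
  by (simp add: topspace_powerset_topology char_fun_def)

lemma char_fun_apply: "x \<in> \<Omega> \<Longrightarrow> char_fun \<Omega> D x \<longleftrightarrow> x \<in> D"
  by (simp add: char_fun_def)

lemma inj_on_char_fun: "inj_on (char_fun \<Omega>) (Pow \<Omega>)"
proof (rule inj_onI)
  fix D D' assume "D \<in> Pow \<Omega>" "D' \<in> Pow \<Omega>" and eq: "char_fun \<Omega> D = char_fun \<Omega> D'"
  then have "x \<in> D \<longleftrightarrow> x \<in> D'" for x
    by (cases "x \<in> \<Omega>") (metis char_fun_apply, blast)
  then show "D = D'"
    by blast
qed

lemma char_fun_Collect:
  assumes "f \<in> topspace (powerset_topology \<Omega>)"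
  shows "char_fun \<Omega> {x\<in>\<Omega>. f x} = f"
proof
  fix x
  show "char_fun \<Omega> {x\<in>\<Omega>. f x} x = f x"
    using assms PiE_arb[of f \<Omega> "\<lambda>_. UNIV" x]
    by (cases "x \<in> \<Omega>") (simp_all add: char_fun_def topspace_powerset_topology)
qed

lemma compact_space_powerset_topology: "compact_space (powerset_topology \<Omega>)"
  unfolding powerset_topology_def compact_space_product_topology
  by (simp add: compact_space_discrete_topology)

lemma Hausdorff_space_powerset_topology: "Hausdorff_space (powerset_topology \<Omega>)"
  unfolding powerset_topology_def Hausdorff_space_product_topology by simp

lemma compactin_powerset_topology_iff_closedin:
  "compactin (powerset_topology \<Omega>) K \<longleftrightarrow> closedin (powerset_topology \<Omega>) K"
  using compactin_imp_closedin closedin_compact_space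
    Hausdorff_space_powerset_topology compact_space_powerset_topology by blast

lemma char_fun_in_PiE_if_agree:
  assumes "char_fun \<Omega> D \<in> Pi\<^sub>E \<Omega> U" and "\<And>x. x \<in> \<Omega> \<Longrightarrow> U x \<noteq> UNIV \<Longrightarrow> x \<in> D' \<longleftrightarrow> x \<in> D"
  shows "char_fun \<Omega> D' \<in> Pi\<^sub>E \<Omega> U"
proof (rule PiE_I)
  fix x assume x: "x \<in> \<Omega>"
  show "char_fun \<Omega> D' x \<in> U x"
  proof (cases "U x = UNIV")
    case False
    then have "char_fun \<Omega> D' x = char_fun \<Omega> D x"
      using x assms(2) by (simp add: char_fun_apply)
    then show ?thesis
      using assms(1) x by (simp add: PiE_iff)
  qed simp
qed (simp add: char_fun_def)

lemma char_fun_in_box_iff: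
  assumes "D \<subseteq> \<Omega>" "D' \<subseteq> \<Omega>"
  shows "char_fun \<Omega> D' \<in> (\<Pi>\<^sub>E x\<in>\<Omega>. if x \<in> F then {char_fun \<Omega> D x} else UNIV) \<longleftrightarrow> D' \<inter> F = D \<inter> F"
proof
  assume box: "char_fun \<Omega> D' \<in> (\<Pi>\<^sub>E x\<in>\<Omega>. if x \<in> F then {char_fun \<Omega> D x} else UNIV)"
  have "x \<in> D' \<longleftrightarrow> x \<in> D" if "x \<in> F" for x
  proof (cases "x \<in> \<Omega>")
    case True
    with box have "char_fun \<Omega> D' x \<in> (if x \<in> F then {char_fun \<Omega> D x} else UNIV)"
      by (rule PiE_mem)
    with True that show ?thesis
      by (simp add: char_fun_apply)
  qed (use assms in blast)
  then show "D' \<inter> F = D \<inter> F"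
    by blast
next
  assume "D' \<inter> F = D \<inter> F"
  then have "x \<in> D' \<longleftrightarrow> x \<in> D" if "x \<in> F" for x
    using that by blast
  then show "char_fun \<Omega> D' \<in> (\<Pi>\<^sub>E x\<in>\<Omega>. if x \<in> F then {char_fun \<Omega> D x} else UNIV)"
    by (intro PiE_I) (simp_all add: char_fun_def)
qed

lemma closedin_powerset_topology_imageD:
  assumes closed: "closedin (powerset_topology \<Omega>) (char_fun \<Omega> ` \<K>)" and "\<K> \<subseteq> Pow \<Omega>" "D \<subseteq> \<Omega>"
    and approx: "\<And>F. finite F \<Longrightarrow> \<exists>D'\<in>\<K>. D' \<inter> F = D \<inter> F"
  shows "D \<in> \<K>"
proof -
  let ?P = "powerset_topology \<Omega>" and ?K = "char_fun \<Omega> ` \<K>"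
  have "char_fun \<Omega> D \<in> ?K"
  proof (rule ccontr)
    assume "char_fun \<Omega> D \<notin> ?K"
    then have outside: "char_fun \<Omega> D \<in> topspace ?P - ?K"
      by (simp add: char_fun_in_topspace)
    have "\<forall>f\<in>topspace ?P - ?K. \<exists>U. finite {x\<in>\<Omega>. U x \<noteq> UNIV} \<and> f \<in> Pi\<^sub>E \<Omega> U \<and>
        Pi\<^sub>E \<Omega> U \<subseteq> topspace ?P - ?K"
      using closed by (simp add: closedin_def powerset_topology_def openin_product_topology_alt)
    from this[rule_format, OF outside] obtain U where U: "finite {x\<in>\<Omega>. U x \<noteq> UNIV}"
      "char_fun \<Omega> D \<in> Pi\<^sub>E \<Omega> U" "Pi\<^sub>E \<Omega> U \<subseteq> topspace ?P - ?K"
      by blast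
    obtain D' where D': "D' \<in> \<K>" "D' \<inter> {x\<in>\<Omega>. U x \<noteq> UNIV} = D \<inter> {x\<in>\<Omega>. U x \<noteq> UNIV}"
      using approx[OF U(1)] by blast
    have "x \<in> D' \<longleftrightarrow> x \<in> D" if "x \<in> \<Omega>" "U x \<noteq> UNIV" for x
      using Int_eq_mem_iff[OF D'(2)] that by blast
    with U(2) have "char_fun \<Omega> D' \<in> Pi\<^sub>E \<Omega> U"
      by (rule char_fun_in_PiE_if_agree)
    then show False
      using U(3) D'(1) by blast
  qed
  then show "D \<in> \<K>"
    using inj_on_image_mem_iff[OF inj_on_char_fun, where a = D and A = \<K>] assms(2,3) by simp
qed

lemma closedin_powerset_topology_imageI:
  assumes "\<K> \<subseteq> Pow \<Omega>"
    and approx: "\<And>D. D \<subseteq> \<Omega> \<Longrightarrow> (\<And>F. finite F \<Longrightarrow> \<exists>D'\<in>\<K>. D' \<inter> F = D \<inter> F) \<Longrightarrow> D \<in> \<K>"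
  shows "closedin (powerset_topology \<Omega>) (char_fun \<Omega> ` \<K>)"
proof -
  let ?P = "powerset_topology \<Omega>" and ?K = "char_fun \<Omega> ` \<K>"
  have "\<exists>U. finite {x\<in>\<Omega>. U x \<noteq> UNIV} \<and> f \<in> Pi\<^sub>E \<Omega> U \<and> Pi\<^sub>E \<Omega> U \<subseteq> topspace ?P - ?K"
    if f: "f \<in> topspace ?P - ?K" for f
  proof -
    define D where "D = {x\<in>\<Omega>. f x}"
    have D: "D \<subseteq> \<Omega>" "char_fun \<Omega> D = f"
      using f unfolding D_def by (auto intro: char_fun_Collect)
    with f have "D \<notin> \<K>"
      by blast
    then have "\<not> (\<forall>F. finite F \<longrightarrow> (\<exists>D'\<in>\<K>. D' \<inter> F = D \<inter> F))"
      using approx[OF D(1)] by blast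
    then obtain F where F: "finite F" "\<And>D'. D' \<in> \<K> \<Longrightarrow> D' \<inter> F \<noteq> D \<inter> F"
      by blast
    define U where "U x = (if x \<in> F then {char_fun \<Omega> D x} else UNIV)" for x
    have "char_fun \<Omega> D' \<notin> Pi\<^sub>E \<Omega> U" if "D' \<in> \<K>" for D'
      using char_fun_in_box_iff[OF D(1), of D' F] F(2)[OF that] that assms(1) unfolding U_def by blast
    then have "Pi\<^sub>E \<Omega> U \<subseteq> topspace ?P - ?K"
      by (auto simp: topspace_powerset_topology)
    moreover have "finite {x\<in>\<Omega>. U x \<noteq> UNIV}"
      using F(1) by (rule rev_finite_subset) (auto simp: U_def)
    moreover have "f \<in> Pi\<^sub>E \<Omega> U"
      using char_fun_in_box_iff[OF D(1) D(1)] D(2) unfolding U_def by simp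
    ultimately show ?thesis
      by blast
  qed
  then have "openin ?P (topspace ?P - ?K)"
    by (simp add: powerset_topology_def openin_product_topology_alt)
  then show ?thesis
    by (auto simp: closedin_def char_fun_in_topspace)
qed

lemma closedin_ideals_if_finite_coinitial_upper_bounds:
  assumes "b \<in> \<Omega>" "\<And>x. x \<in> \<Omega> \<Longrightarrow> le b x" "finite_coinitial_upper_bounds \<Omega> le"
  shows "closedin (powerset_topology \<Omega>) (char_fun \<Omega> ` Collect (ideal_in \<Omega> le))"
proof (rule closedin_powerset_topology_imageI)
  show "Collect (ideal_in \<Omega> le) \<subseteq> Pow \<Omega>"
    using ideal_inD(1) by blast
  show "D \<in> Collect (ideal_in \<Omega> le)"
    if "D \<subseteq> \<Omega>" "\<And>F. finite F \<Longrightarrow> \<exists>D'\<in>Collect (ideal_in \<Omega> le). D' \<inter> F = D \<inter> F" for D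
    using ideal_in_if_finitely_approximated[OF assms that(1)] that(2) by blast
qed

lemma not_closedin_ideals_if_finitely_approximated:
  assumes "L \<subseteq> \<Omega>" "\<not> ideal_in \<Omega> le L"
    and "\<And>F. finite F \<Longrightarrow> \<exists>D. ideal_in \<Omega> le D \<and> D \<inter> F = L \<inter> F"
  shows "\<not> closedin (powerset_topology \<Omega>) (char_fun \<Omega> ` Collect (ideal_in \<Omega> le))"
proof
  assume "closedin (powerset_topology \<Omega>) (char_fun \<Omega> ` Collect (ideal_in \<Omega> le))"
  moreover have "Collect (ideal_in \<Omega> le) \<subseteq> Pow \<Omega>"
    using ideal_inD(1) by blast
  ultimately have "L \<in> Collect (ideal_in \<Omega> le)"
    using assms(1) by (rule closedin_powerset_topology_imageD) (simp add: assms(3))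
  with assms(2) show False
    by simp
qed

section \<open>Structures and their isomorphism types\<close>

lemma wf_strucD:
  assumes "wf_struc I \<mu> S"
  shows "finite (fst S)"
    and "i \<in> I \<Longrightarrow> xs \<in> snd S i \<Longrightarrow> length xs = \<mu> i \<and> set xs \<subseteq> fst S"
    and "i \<notin> I \<Longrightarrow> snd S i = {}"
  using assms unfolding wf_struc_def by blast+

lemma is_embedding_relation_iff:
  assumes "is_embedding I \<mu> f S T" "i \<in> I" "length xs = \<mu> i" "set xs \<subseteq> fst S"
  shows "xs \<in> snd S i \<longleftrightarrow> map f xs \<in> snd T i"
  using assms unfolding is_embedding_def by blast

lemma is_embedding_id: "is_embedding I \<mu> id S S"
  unfolding is_embedding_def by auto

lemma is_embedding_comp:
  assumes f: "is_embedding I \<mu> f S T" and g: "is_embedding I \<mu> g T U"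
  shows "is_embedding I \<mu> (g \<circ> f) S U"
  unfolding is_embedding_def
proof (intro conjI ballI allI impI)
  show "inj_on (g \<circ> f) (fst S)"
    using f g unfolding is_embedding_def by (meson comp_inj_on inj_on_subset)
  show "(g \<circ> f) ` fst S \<subseteq> fst U"
    using f g unfolding is_embedding_def by (auto simp: image_subset_iff)
  fix i xs assume i: "i \<in> I" and xs: "length xs = \<mu> i \<and> set xs \<subseteq> fst S"
  moreover have "set (map f xs) \<subseteq> fst T"
    using f xs unfolding is_embedding_def by auto
  ultimately show "xs \<in> snd S i \<longleftrightarrow> map (g \<circ> f) xs \<in> snd U i"
    using is_embedding_relation_iff[OF f] is_embedding_relation_iff[OF g] by simp
qed

lemma embeds_trans: "embeds I \<mu> S T \<Longrightarrow> embeds I \<mu> T U \<Longrightarrow> embeds I \<mu> S U"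
  unfolding embeds_def using is_embedding_comp by blast

lemma embeds_if_isomorphic: "isomorphic I \<mu> S T \<Longrightarrow> embeds I \<mu> S T"
  unfolding isomorphic_def embeds_def by blast

lemma isomorphic_refl: "isomorphic I \<mu> S S"
  unfolding isomorphic_def using is_embedding_id by (metis id_apply image_id)

lemma isomorphic_sym:
  assumes "isomorphic I \<mu> S T"
  shows "isomorphic I \<mu> T S"
proof -
  obtain f where f: "is_embedding I \<mu> f S T" and onto: "f ` fst S = fst T"
    using assms unfolding isomorphic_def by blast
  have inj: "inj_on f (fst S)"
    using f unfolding is_embedding_def by blast
  define g where "g = inv_into (fst S) f"
  have g_into: "g ` fst T \<subseteq> fst S"
    unfolding g_def using onto by (auto intro: inv_into_into)
  have "is_embedding I \<mu> g T S"
    unfolding is_embedding_def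
  proof (intro conjI ballI allI impI)
    show "inj_on g (fst T)"
      unfolding g_def using onto by (simp add: inj_on_inv_into)
    show "g ` fst T \<subseteq> fst S"
      by (fact g_into)
    fix i ys assume i: "i \<in> I" and ys: "length ys = \<mu> i \<and> set ys \<subseteq> fst T"
    have "map f (map g ys) = ys"
      using ys onto unfolding g_def by (simp add: map_idI f_inv_into_f subset_iff)
    moreover have "set (map g ys) \<subseteq> fst S"
      using ys g_into by auto
    ultimately show "ys \<in> snd T i \<longleftrightarrow> map g ys \<in> snd S i"
      using is_embedding_relation_iff[OF f i, of "map g ys"] ys by simp
  qed
  moreover have "g ` fst T = fst S"
    unfolding g_def using onto inj by (metis inv_into_image_cancel order_refl)
  ultimately show ?thesis
    unfolding isomorphic_def by blast
qed

lemma isomorphic_trans: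
  assumes "isomorphic I \<mu> S T" "isomorphic I \<mu> T U"
  shows "isomorphic I \<mu> S U"
proof -
  obtain f where f: "is_embedding I \<mu> f S T" "f ` fst S = fst T"
    using assms(1) unfolding isomorphic_def by blast
  obtain g where g: "is_embedding I \<mu> g T U" "g ` fst T = fst U"
    using assms(2) unfolding isomorphic_def by blast
  have "(g \<circ> f) ` fst S = fst U"
    using f(2) g(2) by (metis image_comp)
  then show ?thesis
    unfolding isomorphic_def using is_embedding_comp[OF f(1) g(1)] by blast
qed

definition iso_class :: "'i set \<Rightarrow> ('i \<Rightarrow> nat) \<Rightarrow> 'i struc \<Rightarrow> 'i struc set" where
  "iso_class I \<mu> S = {T. wf_struc I \<mu> T \<and> isomorphic I \<mu> S T}"

lemma Omega_iff: "X \<in> Omega I \<mu> \<longleftrightarrow> (\<exists>S. wf_struc I \<mu> S \<and> X = iso_class I \<mu> S)"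
proof -
  have "{(S, T). wf_struc I \<mu> S \<and> wf_struc I \<mu> T \<and> isomorphic I \<mu> S T} `` {S} = iso_class I \<mu> S"
    if "wf_struc I \<mu> S" for S
    using that unfolding iso_class_def by blast
  then show ?thesis
    unfolding Omega_def quotient_def by blast
qed

lemma iso_class_in_Omega: "wf_struc I \<mu> S \<Longrightarrow> iso_class I \<mu> S \<in> Omega I \<mu>"
  using Omega_iff by blast

lemma self_in_iso_class: "wf_struc I \<mu> S \<Longrightarrow> S \<in> iso_class I \<mu> S"
  unfolding iso_class_def using isomorphic_refl by blast

lemma Omega_eq_iso_class:
  assumes "X \<in> Omega I \<mu>" "S \<in> X"
  shows "X = iso_class I \<mu> S"
proof -
  obtain S0 where "X = iso_class I \<mu> S0"
    using assms(1) Omega_iff by blast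
  with assms(2) show ?thesis
    unfolding iso_class_def using isomorphic_sym isomorphic_trans by blast
qed

lemma Omega_memberD:
  assumes "X \<in> Omega I \<mu>" "S \<in> X"
  shows "wf_struc I \<mu> S" and "T \<in> X \<Longrightarrow> isomorphic I \<mu> S T"
  using Omega_eq_iso_class[OF assms] assms(2) unfolding iso_class_def by blast+

lemma Omega_nonempty:
  assumes "X \<in> Omega I \<mu>"
  obtains S where "S \<in> X"
proof -
  obtain S where "wf_struc I \<mu> S" "X = iso_class I \<mu> S"
    using assms Omega_iff by blast
  then show thesis
    using that self_in_iso_class by blast
qed

lemma omega_le_iff:
  assumes "X \<in> Omega I \<mu>" "Y \<in> Omega I \<mu>" "S \<in> X" "T \<in> Y"
  shows "omega_le I \<mu> X Y \<longleftrightarrow> embeds I \<mu> S T"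
proof
  assume "omega_le I \<mu> X Y"
  then obtain S' T' where "S' \<in> X" "T' \<in> Y" "embeds I \<mu> S' T'"
    unfolding omega_le_def by blast
  moreover have "embeds I \<mu> S S'" if "S' \<in> X" for S'
    using Omega_memberD(2)[OF assms(1,3) that] by (rule embeds_if_isomorphic)
  moreover have "embeds I \<mu> T' T" if "T' \<in> Y" for T'
    using Omega_memberD(2)[OF assms(2) that assms(4)] by (rule embeds_if_isomorphic)
  ultimately show "embeds I \<mu> S T"
    using embeds_trans by metis
next
  assume "embeds I \<mu> S T"
  then show "omega_le I \<mu> X Y"
    using assms unfolding omega_le_def by blast
qed

lemma omega_le_iso_class:
  "wf_struc I \<mu> S \<Longrightarrow> wf_struc I \<mu> T \<Longrightarrow>
    omega_le I \<mu> (iso_class I \<mu> S) (iso_class I \<mu> T) \<longleftrightarrow> embeds I \<mu> S T"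
  by (intro omega_le_iff iso_class_in_Omega self_in_iso_class)

lemma reflp_on_omega_le: "reflp_on (Omega I \<mu>) (omega_le I \<mu>)"
proof (rule reflp_onI)
  fix X assume "X \<in> Omega I \<mu>"
  then obtain S where "S \<in> X"
    by (rule Omega_nonempty)
  then show "omega_le I \<mu> X X"
    unfolding omega_le_def using embeds_if_isomorphic[OF isomorphic_refl] by blast
qed

lemma transp_on_omega_le: "transp_on (Omega I \<mu>) (omega_le I \<mu>)"
proof (rule transp_onI)
  fix X Y Z assume XYZ: "X \<in> Omega I \<mu>" "Y \<in> Omega I \<mu>" "Z \<in> Omega I \<mu>"
    and le: "omega_le I \<mu> X Y" "omega_le I \<mu> Y Z"
  obtain S T U where STU: "S \<in> X" "T \<in> Y" "U \<in> Z"
    using XYZ by (meson Omega_nonempty)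
  have "embeds I \<mu> S T"
    using le(1) omega_le_iff[OF XYZ(1,2) STU(1,2)] by blast
  moreover have "embeds I \<mu> T U"
    using le(2) omega_le_iff[OF XYZ(2,3) STU(2,3)] by blast
  ultimately show "omega_le I \<mu> X Z"
    using omega_le_iff[OF XYZ(1,3) STU(1,3)] embeds_trans by blast
qed

lemma is_ideal_eq_ideal_in: "is_ideal I \<mu> = ideal_in (Omega I \<mu>) (omega_le I \<mu>)"
  by (simp add: fun_eq_iff is_ideal_def ideal_in_def)

definition substructure :: "'i struc \<Rightarrow> nat set \<Rightarrow> 'i struc" where
  "substructure S B = (B, \<lambda>i. {xs\<in>snd S i. set xs \<subseteq> B})"

definition relabel :: "(nat \<Rightarrow> nat) \<Rightarrow> 'i struc \<Rightarrow> 'i struc" where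
  "relabel h S = (h ` fst S, \<lambda>i. map h ` snd S i)"

lemma wf_substructure:
  "wf_struc I \<mu> S \<Longrightarrow> B \<subseteq> fst S \<Longrightarrow> wf_struc I \<mu> (substructure S B)"
  unfolding wf_struc_def substructure_def by (auto intro: finite_subset)

lemma is_embedding_substructure:
  "B \<subseteq> fst S \<Longrightarrow> is_embedding I \<mu> id (substructure S B) S"
  unfolding is_embedding_def substructure_def by auto

lemma is_embedding_into_substructure:
  "is_embedding I \<mu> f S T \<Longrightarrow> f ` fst S \<subseteq> B \<Longrightarrow> is_embedding I \<mu> f S (substructure T B)"
  unfolding is_embedding_def substructure_def by (auto simp: image_subset_iff)

lemma wf_relabel: "wf_struc I \<mu> S \<Longrightarrow> wf_struc I \<mu> (relabel h S)"
  unfolding wf_struc_def relabel_def by fastforce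

lemma is_embedding_relabel:
  assumes wf: "wf_struc I \<mu> S" and inj: "inj_on h (fst S)"
  shows "is_embedding I \<mu> h S (relabel h S)"
  unfolding is_embedding_def
proof (intro conjI ballI allI impI)
  show "inj_on h (fst S)"
    by (fact inj)
  show "h ` fst S \<subseteq> fst (relabel h S)"
    unfolding relabel_def by simp
  fix i xs assume i: "i \<in> I" and xs: "length xs = \<mu> i \<and> set xs \<subseteq> fst S"
  show "xs \<in> snd S i \<longleftrightarrow> map h xs \<in> snd (relabel h S) i"
  proof
    assume "map h xs \<in> snd (relabel h S) i"
    then obtain ys where ys: "ys \<in> snd S i" "map h xs = map h ys"
      unfolding relabel_def by auto
    have "set ys \<subseteq> fst S"
      using wf_strucD(2)[OF wf i ys(1)] by blast
    with xs inj have "inj_on h (set xs \<union> set ys)"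
      by (meson Un_least inj_on_subset)
    with ys(2) have "xs = ys"
      by (simp add: inj_on_map_eq_map)
    with ys(1) show "xs \<in> snd S i"
      by simp
  qed (simp add: relabel_def)
qed

lemma isomorphic_relabel:
  "wf_struc I \<mu> S \<Longrightarrow> inj_on h (fst S) \<Longrightarrow> isomorphic I \<mu> S (relabel h S)"
  unfolding isomorphic_def using is_embedding_relabel by (fastforce simp: relabel_def)

definition empty_struc :: "'i struc" where
  "empty_struc = ({}, \<lambda>_. {})"

lemma wf_empty_struc: "wf_struc I \<mu> empty_struc"
  unfolding wf_struc_def empty_struc_def by simp

text \<open>Positive arities are needed here: a nullary relation holding in a structure is not
  reflected by the embedding of the empty structure.\<close>
lemma omega_le_iso_class_empty_struc:
  assumes arity: "\<forall>i\<in>I. \<mu> i \<ge> 1" and X: "X \<in> Omega I \<mu>"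
  shows "omega_le I \<mu> (iso_class I \<mu> empty_struc) X"
proof -
  obtain S where "S \<in> X"
    using X by (rule Omega_nonempty)
  moreover have "is_embedding I \<mu> f empty_struc S" for f
    unfolding is_embedding_def empty_struc_def using arity by fastforce
  ultimately show ?thesis
    unfolding omega_le_def embeds_def using self_in_iso_class[OF wf_empty_struc] by blast
qed

section \<open>Finitely many relations of higher arity\<close>

text \<open>Since all arities are positive, the last case covers exactly the unary relations.\<close>
definition amalgam ::
    "'i set \<Rightarrow> ('i \<Rightarrow> nat) \<Rightarrow> 'i struc \<Rightarrow> 'i struc \<Rightarrow> nat set \<Rightarrow> (nat \<Rightarrow> nat) \<Rightarrow> (nat \<Rightarrow> nat) \<Rightarrow>
      ('i \<Rightarrow> nat list set) \<Rightarrow> 'i struc" where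
  "amalgam I \<mu> S T A f g R = (A, \<lambda>i. if i \<notin> I then {} else if 2 \<le> \<mu> i then R i
     else map f ` snd S i \<union> map g ` snd T i)"

definition amalgam_candidates :: "'i set \<Rightarrow> ('i \<Rightarrow> nat) \<Rightarrow> 'i struc \<Rightarrow> 'i struc \<Rightarrow> 'i struc set" where
  "amalgam_candidates I \<mu> S T = (let n = card (fst S) + card (fst T) in
     (\<lambda>(A, f, g, R). amalgam I \<mu> S T A f g R) `
       (Pow {..<n} \<times> (fst S \<rightarrow>\<^sub>E {..<n}) \<times> (fst T \<rightarrow>\<^sub>E {..<n}) \<times>
        (\<Pi>\<^sub>E i\<in>{i\<in>I. 2 \<le> \<mu> i}. Pow {xs. set xs \<subseteq> {..<n} \<and> length xs = \<mu> i})))"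

lemma finite_amalgam_candidates:
  assumes "finite (fst S)" "finite (fst T)" "finite {i\<in>I. 2 \<le> \<mu> i}"
  shows "finite (amalgam_candidates I \<mu> S T)"
  unfolding amalgam_candidates_def Let_def using assms
  by (intro finite_imageI finite_cartesian_product finite_PiE) (auto intro: finite_lists_length_eq)

lemma unary_relation_of_joint_image:
  assumes i: "i \<in> I" "\<mu> i = 1"
    and wf: "wf_struc I \<mu> S" "wf_struc I \<mu> T" "wf_struc I \<mu> U"
    and f: "is_embedding I \<mu> f S U" and g: "is_embedding I \<mu> g T U"
    and onto: "fst U = f ` fst S \<union> g ` fst T"
  shows "snd U i = map f ` snd S i \<union> map g ` snd T i"
proof
  show "snd U i \<subseteq> map f ` snd S i \<union> map g ` snd T i"
  proof
    fix zs assume zs: "zs \<in> snd U i"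
    then obtain z where z: "zs = [z]" "z \<in> fst U"
      using wf_strucD(2)[OF wf(3) i(1) zs] i(2) by (auto simp: length_Suc_conv)
    with onto consider b where "b \<in> fst S" "z = f b" | c where "c \<in> fst T" "z = g c"
      by blast
    then show "zs \<in> map f ` snd S i \<union> map g ` snd T i"
    proof cases
      case 1
      then have "[b] \<in> snd S i"
        using is_embedding_relation_iff[OF f i(1), of "[b]"] i(2) zs z by simp
      with 1 z show ?thesis
        by (metis UnI1 image_eqI list.simps(8,9))
    next
      case 2
      then have "[c] \<in> snd T i"
        using is_embedding_relation_iff[OF g i(1), of "[c]"] i(2) zs z by simp
      with 2 z show ?thesis
        by (metis UnI2 image_eqI list.simps(8,9))
    qed
  qed
  show "map f ` snd S i \<union> map g ` snd T i \<subseteq> snd U i"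
    using is_embedding_relation_iff[OF f i(1)] is_embedding_relation_iff[OF g i(1)]
      wf_strucD(2)[OF wf(1) i(1)] wf_strucD(2)[OF wf(2) i(1)] by blast
qed

lemma joint_image_eq_amalgam:
  assumes arity: "\<forall>i\<in>I. \<mu> i \<ge> 1"
    and wf: "wf_struc I \<mu> S" "wf_struc I \<mu> T" "wf_struc I \<mu> U"
    and f: "is_embedding I \<mu> f S U" and g: "is_embedding I \<mu> g T U"
    and onto: "fst U = f ` fst S \<union> g ` fst T"
  shows "U = amalgam I \<mu> S T (fst U) f g (snd U)"
proof (rule prod_eqI)
  have "snd U i = snd (amalgam I \<mu> S T (fst U) f g (snd U)) i" for i
  proof (cases "i \<in> I \<and> \<mu> i = 1")
    case True
    then show ?thesis
      using unary_relation_of_joint_image[OF _ _ wf f g onto] by (simp add: amalgam_def)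
  next
    case False
    then show ?thesis
      using arity wf_strucD(3)[OF wf(3)] by (force simp: amalgam_def)
  qed
  then show "snd U = snd (amalgam I \<mu> S T (fst U) f g (snd U))"
    by blast
qed (simp add: amalgam_def)

lemma amalgam_restrict:
  assumes "wf_struc I \<mu> S" "wf_struc I \<mu> T"
  shows "amalgam I \<mu> S T A (restrict f (fst S)) (restrict g (fst T)) (restrict R {i\<in>I. 2 \<le> \<mu> i})
    = amalgam I \<mu> S T A f g R"
proof -
  have "map (restrict f (fst S)) ` snd S i = map f ` snd S i"
    and "map (restrict g (fst T)) ` snd T i = map g ` snd T i" if "i \<in> I" for i
    using wf_strucD(2)[OF assms(1) that] wf_strucD(2)[OF assms(2) that]
    by (auto intro!: image_cong map_cong simp: subset_iff)
  then show ?thesis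
    unfolding amalgam_def by (auto simp: fun_eq_iff)
qed

text \<open>The witness is the substructure of U on the union of the two images, relabelled onto an
  initial segment of nat.\<close>
lemma joint_image_below:
  assumes wf: "wf_struc I \<mu> S" "wf_struc I \<mu> T" "wf_struc I \<mu> U"
    and f: "is_embedding I \<mu> f S U" and g: "is_embedding I \<mu> g T U"
  obtains V f' g' where "wf_struc I \<mu> V" "is_embedding I \<mu> f' S V" "is_embedding I \<mu> g' T V"
    "embeds I \<mu> V U" "fst V = f' ` fst S \<union> g' ` fst T" "fst V \<subseteq> {..<card (fst S) + card (fst T)}"
proof -
  define B where "B = f ` fst S \<union> g ` fst T"
  have fin: "finite (fst S)" "finite (fst T)"
    using wf_strucD(1) wf by blast+
  then have "finite B"
    unfolding B_def by simp
  have B_sub: "B \<subseteq> fst U"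
    unfolding B_def using f g unfolding is_embedding_def by blast
  have "card B \<le> card (fst S) + card (fst T)"
    unfolding B_def using fin by (meson add_mono card_Un_le card_image_le order_trans)
  obtain h where h: "bij_betw h B {0..<card B}"
    using ex_bij_betw_finite_nat[OF \<open>finite B\<close>] by blast
  define M where "M = substructure U B"
  have wf_M: "wf_struc I \<mu> M" and fst_M: "fst M = B"
    unfolding M_def using wf_substructure[OF wf(3) B_sub] by (simp_all add: substructure_def)
  have inj: "inj_on h (fst M)"
    using h fst_M by (simp add: bij_betw_def)
  have "is_embedding I \<mu> f S M" "is_embedding I \<mu> g T M"
    unfolding M_def B_def
    by (auto intro: is_embedding_into_substructure[OF f] is_embedding_into_substructure[OF g])
  then have "is_embedding I \<mu> (h \<circ> f) S (relabel h M)" "is_embedding I \<mu> (h \<circ> g) T (relabel h M)"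
    using is_embedding_comp is_embedding_relabel[OF wf_M inj] by blast+
  moreover have "embeds I \<mu> (relabel h M) U"
    using embeds_if_isomorphic[OF isomorphic_sym[OF isomorphic_relabel[OF wf_M inj]]]
      is_embedding_substructure[OF B_sub] embeds_trans
    unfolding M_def embeds_def by metis
  moreover have "fst (relabel h M) = (h \<circ> f) ` fst S \<union> (h \<circ> g) ` fst T"
    unfolding relabel_def fst_M B_def by (simp add: image_Un image_comp)
  moreover have "fst (relabel h M) \<subseteq> {..<card (fst S) + card (fst T)}"
    using h fst_M \<open>card B \<le> card (fst S) + card (fst T)\<close> by (auto simp: relabel_def bij_betw_def)
  ultimately show thesis
    using that wf_relabel[OF wf_M] by blast
qed

lemma joint_image_in_amalgam_candidates:
  assumes arity: "\<forall>i\<in>I. \<mu> i \<ge> 1"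
    and wf: "wf_struc I \<mu> S" "wf_struc I \<mu> T" "wf_struc I \<mu> V"
    and f: "is_embedding I \<mu> f S V" and g: "is_embedding I \<mu> g T V"
    and onto: "fst V = f ` fst S \<union> g ` fst T" and small: "fst V \<subseteq> {..<card (fst S) + card (fst T)}"
  shows "V \<in> amalgam_candidates I \<mu> S T"
proof -
  define n where "n = card (fst S) + card (fst T)"
  define J where "J = {i\<in>I. 2 \<le> \<mu> i}"
  have V_eq: "V = amalgam I \<mu> S T (fst V) (restrict f (fst S)) (restrict g (fst T)) (restrict (snd V) J)"
    using joint_image_eq_amalgam[OF arity wf f g onto] amalgam_restrict[OF wf(1,2)]
    unfolding J_def by simp
  have "restrict f (fst S) \<in> fst S \<rightarrow>\<^sub>E {..<n}" "restrict g (fst T) \<in> fst T \<rightarrow>\<^sub>E {..<n}"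
    using onto small unfolding n_def by auto
  moreover have "snd V i \<subseteq> {xs. set xs \<subseteq> {..<n} \<and> length xs = \<mu> i}" if "i \<in> I" for i
    using wf_strucD(2)[OF wf(3) that] small unfolding n_def by auto
  then have "restrict (snd V) J \<in> (\<Pi>\<^sub>E i\<in>J. Pow {xs. set xs \<subseteq> {..<n} \<and> length xs = \<mu> i})"
    unfolding J_def by (simp add: restrict_PiE_iff)
  ultimately have "(fst V, restrict f (fst S), restrict g (fst T), restrict (snd V) J) \<in>
      Pow {..<n} \<times> (fst S \<rightarrow>\<^sub>E {..<n}) \<times> (fst T \<rightarrow>\<^sub>E {..<n}) \<times>
      (\<Pi>\<^sub>E i\<in>J. Pow {xs. set xs \<subseteq> {..<n} \<and> length xs = \<mu> i})"
    using small unfolding n_def by simp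
  then show ?thesis
    unfolding amalgam_candidates_def Let_def n_def[symmetric] J_def[symmetric]
    by (rule image_eqI[rotated]) (simp only: case_prod_conv, rule V_eq)
qed

lemma finite_coinitial_upper_bounds_Omega:
  assumes arity: "\<forall>i\<in>I. \<mu> i \<ge> 1" and fin: "finite {i\<in>I. 2 \<le> \<mu> i}"
  shows "finite_coinitial_upper_bounds (Omega I \<mu>) (omega_le I \<mu>)"
  unfolding finite_coinitial_upper_bounds_def
proof (intro ballI)
  fix X Y assume X: "X \<in> Omega I \<mu>" and Y: "Y \<in> Omega I \<mu>"
  obtain S T where ST: "S \<in> X" "T \<in> Y"
    using X Y by (meson Omega_nonempty)
  have wf: "wf_struc I \<mu> S" "wf_struc I \<mu> T"
    using Omega_memberD(1) X Y ST by blast+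
  define C where "C = iso_class I \<mu> `
    {V\<in>amalgam_candidates I \<mu> S T. wf_struc I \<mu> V \<and> embeds I \<mu> S V \<and> embeds I \<mu> T V}"
  have sub: "C \<subseteq> Omega I \<mu>"
    unfolding C_def using iso_class_in_Omega by blast
  have fin_C: "finite C"
    unfolding C_def using finite_amalgam_candidates[OF wf_strucD(1)[OF wf(1)] wf_strucD(1)[OF wf(2)] fin]
    by simp
  have upper: "omega_le I \<mu> X W \<and> omega_le I \<mu> Y W" if "W \<in> C" for W
    using that omega_le_iff[OF X _ ST(1)] omega_le_iff[OF Y _ ST(2)] iso_class_in_Omega self_in_iso_class
    unfolding C_def by blast
  have coinitial: "\<exists>W\<in>C. omega_le I \<mu> W Z"
    if Z: "Z \<in> Omega I \<mu>" and le: "omega_le I \<mu> X Z" "omega_le I \<mu> Y Z" for Z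
  proof -
    obtain U where U: "U \<in> Z"
      using Z by (rule Omega_nonempty)
    then have "embeds I \<mu> S U" "embeds I \<mu> T U"
      using omega_le_iff[OF X Z ST(1) U] omega_le_iff[OF Y Z ST(2) U] le by blast+
    then obtain V f g where V: "wf_struc I \<mu> V" "is_embedding I \<mu> f S V" "is_embedding I \<mu> g T V"
      "embeds I \<mu> V U" "fst V = f ` fst S \<union> g ` fst T" "fst V \<subseteq> {..<card (fst S) + card (fst T)}"
      using joint_image_below[OF wf Omega_memberD(1)[OF Z U]] unfolding embeds_def by metis
    then have "V \<in> amalgam_candidates I \<mu> S T"
      using joint_image_in_amalgam_candidates[OF arity wf] by blast
    moreover have "omega_le I \<mu> (iso_class I \<mu> V) Z"
      using omega_le_iff[OF iso_class_in_Omega Z self_in_iso_class U] V by blast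
    ultimately show ?thesis
      using V unfolding C_def embeds_def by blast
  qed
  show "\<exists>C\<subseteq>Omega I \<mu>. finite C \<and> (\<forall>W\<in>C. omega_le I \<mu> X W \<and> omega_le I \<mu> Y W) \<and>
      (\<forall>Z\<in>Omega I \<mu>. omega_le I \<mu> X Z \<longrightarrow> omega_le I \<mu> Y Z \<longrightarrow> (\<exists>W\<in>C. omega_le I \<mu> W Z))"
    using sub fin_C upper coinitial by (intro exI[of _ C] conjI ballI impI) blast+
qed

section \<open>Infinitely many relations of higher arity\<close>

context
  fixes I :: "'i set" and \<mu> :: "'i \<Rightarrow> nat" and j0 :: 'i
  assumes j0: "j0 \<in> I" "2 \<le> \<mu> j0"
begin

definition looped_point :: "'i struc" where
  "looped_point = ({0}, \<lambda>i. if i = j0 then {replicate (\<mu> j0) 0} else {})"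

definition bare_point :: "'i struc" where
  "bare_point = ({1}, \<lambda>_. {})"

definition glued_pair :: "'i \<Rightarrow> 'i struc" where
  "glued_pair n = ({0, 1}, \<lambda>i. (if i = j0 then {replicate (\<mu> j0) 0} else {}) \<union>
     (if i = n then {xs. length xs = \<mu> n \<and> set xs = {0, 1}} else {}))"

lemma wf_looped_point: "wf_struc I \<mu> looped_point"
  unfolding wf_struc_def looped_point_def using j0 by auto

lemma wf_bare_point: "wf_struc I \<mu> bare_point"
  unfolding wf_struc_def bare_point_def by auto

lemma wf_glued_pair:
  assumes "n \<in> I"
  shows "wf_struc I \<mu> (glued_pair n)"
  unfolding wf_struc_def
proof (intro conjI ballI allI impI)
  show "finite (fst (glued_pair n))"
    unfolding glued_pair_def by simp
  fix i assume "i \<in> I"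
  have "(if i = j0 then {replicate (\<mu> j0) (0::nat)} else {}) \<subseteq> {xs. length xs = \<mu> i \<and> set xs \<subseteq> {0, 1}}"
    by (cases "i = j0") (simp_all add: set_replicate_conv_if)
  moreover have "(if i = n then {xs. length xs = \<mu> n \<and> set xs = {0::nat, 1}} else {}) \<subseteq>
      {xs. length xs = \<mu> i \<and> set xs \<subseteq> {0, 1}}"
    by (cases "i = n") (simp_all add: subset_iff)
  ultimately show "snd (glued_pair n) i \<subseteq> {xs. length xs = \<mu> i \<and> set xs \<subseteq> fst (glued_pair n)}"
    unfolding glued_pair_def by simp
next
  fix i assume "i \<notin> I"
  with j0(1) assms have "i \<noteq> j0" "i \<noteq> n"
    by auto
  then show "snd (glued_pair n) i = {}"
    unfolding glued_pair_def by simp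
qed

lemma substructure_glued_pair_0: "n \<noteq> j0 \<Longrightarrow> substructure (glued_pair n) {0} = looped_point"
  unfolding substructure_def glued_pair_def looped_point_def by (auto simp: fun_eq_iff)

lemma substructure_glued_pair_1: "substructure (glued_pair n) {1} = bare_point"
  using j0(2) unfolding substructure_def glued_pair_def bare_point_def by (auto simp: fun_eq_iff)

lemma not_embeds_bare_looped: "\<not> embeds I \<mu> bare_point looped_point"
proof
  assume "embeds I \<mu> bare_point looped_point"
  then obtain f where f: "is_embedding I \<mu> f bare_point looped_point"
    unfolding embeds_def by blast
  then have "f 1 = 0"
    unfolding is_embedding_def bare_point_def looped_point_def by auto
  moreover have "replicate (\<mu> j0) 1 \<in> snd bare_point j0 \<longleftrightarrow>
      map f (replicate (\<mu> j0) 1) \<in> snd looped_point j0"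
    by (rule is_embedding_relation_iff[OF f j0(1)]) (auto simp: bare_point_def)
  ultimately show False
    unfolding bare_point_def looped_point_def by simp
qed

lemma not_embeds_looped_bare: "\<not> embeds I \<mu> looped_point bare_point"
proof
  assume "embeds I \<mu> looped_point bare_point"
  then obtain f where f: "is_embedding I \<mu> f looped_point bare_point"
    unfolding embeds_def by blast
  have "replicate (\<mu> j0) 0 \<in> snd looped_point j0 \<longleftrightarrow>
      map f (replicate (\<mu> j0) 0) \<in> snd bare_point j0"
    by (rule is_embedding_relation_iff[OF f j0(1)]) (auto simp: looped_point_def)
  then show False
    unfolding bare_point_def looped_point_def by simp
qed

text \<open>A structure embedding into glued_pair n and meeting both of its points contains
  a tuple mapped into the relation with index n, which is empty in glued_pair m for m \<noteq> n.\<close>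
lemma glued_pair_unique:
  assumes f: "is_embedding I \<mu> f S (glued_pair n)" and g: "is_embedding I \<mu> g S (glued_pair m)"
    and n: "n \<in> I" "2 \<le> \<mu> n" "n \<noteq> j0"
    and not_below: "\<not> embeds I \<mu> S looped_point" "\<not> embeds I \<mu> S bare_point"
  shows "n = m"
proof (rule ccontr)
  assume "n \<noteq> m"
  have f_into: "f ` fst S \<subseteq> {0, 1}"
    using f unfolding is_embedding_def glued_pair_def by simp
  have "\<not> f ` fst S \<subseteq> {0}"
    using is_embedding_into_substructure[OF f] not_below(1) substructure_glued_pair_0[OF n(3)]
    unfolding embeds_def by metis
  then obtain a where a: "a \<in> fst S" "f a \<notin> {0}"
    by (meson image_subsetI)
  with f_into have "f a = 1"
    by (auto simp: image_subset_iff)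
  have "\<not> f ` fst S \<subseteq> {1}"
    using is_embedding_into_substructure[OF f] not_below(2) substructure_glued_pair_1
    unfolding embeds_def by metis
  then obtain b where b: "b \<in> fst S" "f b \<notin> {1}"
    by (meson image_subsetI)
  with f_into have "f b = 0"
    by (auto simp: image_subset_iff)
  define xs where "xs = b # replicate (\<mu> n - 1) a"
  have xs: "length xs = \<mu> n" "set xs \<subseteq> fst S"
    unfolding xs_def using n(2) a(1) b(1) by auto
  have "set (map f xs) = {0, 1}"
    unfolding xs_def using n(2) \<open>f a = 1\<close> \<open>f b = 0\<close> by auto
  then have "map f xs \<in> snd (glued_pair n) n"
    using xs(1) unfolding glued_pair_def by simp
  then have "map g xs \<in> snd (glued_pair m) n"
    using is_embedding_relation_iff[OF f n(1) xs] is_embedding_relation_iff[OF g n(1) xs] by simp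
  then show False
    using \<open>n \<noteq> m\<close> n(3) unfolding glued_pair_def by simp
qed

definition below_glued_pair :: "'i \<Rightarrow> 'i struc set set" where
  "below_glued_pair n = {W\<in>Omega I \<mu>. omega_le I \<mu> W (iso_class I \<mu> (glued_pair n))}"

definition below_points :: "'i struc set set" where
  "below_points = {W\<in>Omega I \<mu>.
     omega_le I \<mu> W (iso_class I \<mu> looped_point) \<or> omega_le I \<mu> W (iso_class I \<mu> bare_point)}"

lemma below_points_subset_Omega: "below_points \<subseteq> Omega I \<mu>"
  unfolding below_points_def by blast

lemma ideal_in_below_glued_pair: "n \<in> I \<Longrightarrow> ideal_in (Omega I \<mu>) (omega_le I \<mu>) (below_glued_pair n)"
  unfolding below_glued_pair_def
  by (intro ideal_in_principal reflp_on_omega_le transp_on_omega_le iso_class_in_Omega wf_glued_pair)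

lemma not_ideal_in_below_points: "\<not> ideal_in (Omega I \<mu>) (omega_le I \<mu>) below_points"
  unfolding below_points_def
  using not_ideal_in_union_principal[OF transp_on_omega_le reflp_on_omega_le
      iso_class_in_Omega[OF wf_looped_point] iso_class_in_Omega[OF wf_bare_point]]
    omega_le_iso_class[OF wf_looped_point wf_bare_point] omega_le_iso_class[OF wf_bare_point wf_looped_point]
    not_embeds_looped_bare not_embeds_bare_looped
  by blast

lemma below_points_subset_below_glued_pair:
  assumes "n \<in> I" "n \<noteq> j0"
  shows "below_points \<subseteq> below_glued_pair n"
proof -
  have "{0} \<subseteq> fst (glued_pair n)" "{1} \<subseteq> fst (glued_pair n)"
    by (simp_all add: glued_pair_def)
  then have "embeds I \<mu> looped_point (glued_pair n)" "embeds I \<mu> bare_point (glued_pair n)"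
    using is_embedding_substructure substructure_glued_pair_0[OF assms(2)] substructure_glued_pair_1
    unfolding embeds_def by metis+
  then have "omega_le I \<mu> (iso_class I \<mu> looped_point) (iso_class I \<mu> (glued_pair n))"
    and "omega_le I \<mu> (iso_class I \<mu> bare_point) (iso_class I \<mu> (glued_pair n))"
    using omega_le_iso_class wf_looped_point wf_bare_point wf_glued_pair[OF assms(1)] by blast+
  then show ?thesis
    unfolding below_points_def below_glued_pair_def
    using transp_onD[OF transp_on_omega_le _ iso_class_in_Omega iso_class_in_Omega]
      wf_looped_point wf_bare_point wf_glued_pair[OF assms(1)]
    by blast
qed

lemma below_glued_pair_unique:
  assumes W: "W \<notin> below_points" "W \<in> below_glued_pair n" "W \<in> below_glued_pair m"
    and n: "n \<in> I" "2 \<le> \<mu> n" "n \<noteq> j0" and m: "m \<in> I"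
  shows "n = m"
proof -
  have W_Omega: "W \<in> Omega I \<mu>"
    using W(2) unfolding below_glued_pair_def by blast
  then obtain S where S: "S \<in> W"
    by (rule Omega_nonempty)
  have embeds_iff: "omega_le I \<mu> W (iso_class I \<mu> P) \<longleftrightarrow> embeds I \<mu> S P" if "wf_struc I \<mu> P" for P
    by (rule omega_le_iff[OF W_Omega iso_class_in_Omega[OF that] S self_in_iso_class[OF that]])
  obtain f g where "is_embedding I \<mu> f S (glued_pair n)" "is_embedding I \<mu> g S (glued_pair m)"
    using W(2,3) embeds_iff[OF wf_glued_pair[OF n(1)]] embeds_iff[OF wf_glued_pair[OF m]]
    unfolding below_glued_pair_def embeds_def by blast
  moreover have "\<not> embeds I \<mu> S looped_point" "\<not> embeds I \<mu> S bare_point"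
    using W(1) W_Omega embeds_iff[OF wf_looped_point] embeds_iff[OF wf_bare_point]
    unfolding below_points_def by blast+
  ultimately show ?thesis
    using glued_pair_unique n by blast
qed

lemma below_points_finitely_approximated:
  assumes "infinite {i\<in>I. 2 \<le> \<mu> i}" and "finite F"
  shows "\<exists>D. ideal_in (Omega I \<mu>) (omega_le I \<mu>) D \<and> D \<inter> F = below_points \<inter> F"
proof -
  define J where "J = {i\<in>I. 2 \<le> \<mu> i} - {j0}"
  have "finite {n\<in>J. W \<in> below_glued_pair n}" if "W \<notin> below_points" for W
  proof (cases "{n\<in>J. W \<in> below_glued_pair n} = {}")
    case False
    then obtain n where n: "n \<in> J" "W \<in> below_glued_pair n"
      by blast
    with that have "{n\<in>J. W \<in> below_glued_pair n} \<subseteq> {n}"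
      using below_glued_pair_unique unfolding J_def by blast
    then show ?thesis
      by (rule finite_subset) simp
  qed (metis finite.emptyI)
  moreover have "infinite J"
    using assms(1) unfolding J_def by simp
  ultimately obtain n where "n \<in> J" "below_glued_pair n \<inter> F = below_points \<inter> F"
    using finite_agreement_with_family[of J below_points below_glued_pair F]
      below_points_subset_below_glued_pair assms(2) unfolding J_def by blast
  moreover have "ideal_in (Omega I \<mu>) (omega_le I \<mu>) (below_glued_pair n)"
    using \<open>n \<in> J\<close> ideal_in_below_glued_pair unfolding J_def by blast
  ultimately show ?thesis
    by blast
qed

end

lemma exists_finitely_approximated_non_ideal:
  assumes "infinite {i\<in>I. 2 \<le> \<mu> i}"
  obtains L where "L \<subseteq> Omega I \<mu>" "\<not> ideal_in (Omega I \<mu>) (omega_le I \<mu>) L"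
    "\<And>F. finite F \<Longrightarrow> \<exists>D. ideal_in (Omega I \<mu>) (omega_le I \<mu>) D \<and> D \<inter> F = L \<inter> F"
proof -
  obtain j0 where j0: "j0 \<in> I" "2 \<le> \<mu> j0"
    using infinite_imp_nonempty[OF assms] by blast
  show thesis
  proof (rule that)
    show "below_points I \<mu> j0 \<subseteq> Omega I \<mu>"
      using j0 by (rule below_points_subset_Omega)
    show "\<not> ideal_in (Omega I \<mu>) (omega_le I \<mu>) (below_points I \<mu> j0)"
      using j0 by (rule not_ideal_in_below_points)
    show "\<exists>D. ideal_in (Omega I \<mu>) (omega_le I \<mu>) D \<and> D \<inter> F = below_points I \<mu> j0 \<inter> F"
      if "finite F" for F
      using j0 assms that by (rule below_points_finitely_approximated)
  qed
qed

theorem lemma7: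
  fixes I :: "'i set" and \<mu> :: "'i \<Rightarrow> nat"
  assumes "\<forall>i\<in>I. \<mu> i \<ge> 1"
  shows "compactin (powerset_topology (Omega I \<mu>)) (char_fun (Omega I \<mu>) ` ideals I \<mu>)
     \<longleftrightarrow> finite {i\<in>I. \<mu> i \<ge> 2}"
proof -
  have ideals: "ideals I \<mu> = Collect (ideal_in (Omega I \<mu>) (omega_le I \<mu>))"
    by (simp add: ideals_def is_ideal_eq_ideal_in)
  have "closedin (powerset_topology (Omega I \<mu>))
      (char_fun (Omega I \<mu>) ` Collect (ideal_in (Omega I \<mu>) (omega_le I \<mu>)))"
    if "finite {i\<in>I. 2 \<le> \<mu> i}"
    using omega_le_iso_class_empty_struc[OF assms] finite_coinitial_upper_bounds_Omega[OF assms that]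
    by (rule closedin_ideals_if_finite_coinitial_upper_bounds[OF iso_class_in_Omega[OF wf_empty_struc]])
  moreover have "\<not> closedin (powerset_topology (Omega I \<mu>))
      (char_fun (Omega I \<mu>) ` Collect (ideal_in (Omega I \<mu>) (omega_le I \<mu>)))"
    if "infinite {i\<in>I. 2 \<le> \<mu> i}"
    using that by (elim exists_finitely_approximated_non_ideal not_closedin_ideals_if_finitely_approximated)
  ultimately show ?thesis
    unfolding compactin_powerset_topology_iff_closedin ideals by blast
qed

end
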